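(* Consider problem (P) under the standing assumptions stated in the context, and suppose (P) is solvable. Then (P) has a unique globally optimal solution if and only if $k_j>0$ for every $j\in\{1,\dots,n\}$.
   Context: Max-plus algebra: $\mathbb{R}_{\max}=\mathbb{R}\cup\{-\infty\}$ with $a\oplus b=\max\{a,b\}$ and $a\otimes b=a+b$; $\varepsilon=-\infty$. For $\mathbf{A}=(a_{ij})\in\mathbb{R}_{\max}^{m\times n}$ and $\mathbf{x}=(x_j)\in\mathbb{R}^n$, $\mathbf{A}\otimes\mathbf{x}$ is the vector with $i$th component $F_i(\mathbf{x})=\max_{1\le j\le n}(a_{ij}+x_j)$, with $r+(-\infty)=-\infty$. Vectors are compared componentwise. Problem (P): given $\mathbf{A}=(a_{ij})\in\mathbb{R}_{\max}^{m\times n}$, reals $k_1,\dots,k_n\ge 0$ not all zero, and $c\in\mathbb{R}$, let $\mathcal{X}=\{\mathbf{x}\in\mathbb{R}^n : \sum_{j=1}^n k_jx_j=c\}$ and $F(\mathbf{x})=\mathbf{A}\otimes\mathbf{x}$. A point $\tilde{\mathbf{x}}\in\mathcal{X}$ is a globally optimal solution of (P) if $F(\mathbf{x})\ge F(\tilde{\mathbf{x}})$ componentwise for every $\mathbf{x}\in\mathcal{X}$; (P) is solvable if a globally optimal solution exists. Standing assumptions: (1) no row of $\mathbf{A}$ consists entirely of $-\infty$ entries; (2) if the $j$th column of $\mathbf{A}$ consists entirely of $-\infty$ entries, then $k_j>0$. *)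

theory Defs
  imports "HOL-Analysis.Analysis" "HOL-Library.Extended_Real"
begin

text \<open>A matrix A in R_max^{m x n} is a function
  A :: nat => nat => ereal with indices i in {1..m}, j in {1..n}; entries lie in
  R \<union> {-\<infinity>}, i.e. are never +\<infinity>. Vectors x in R^n are functions
  nat => real, taken to be 0 outside {1..n} (so that equality of vectors is
  plain equality of functions).\<close>

definition maxplus_matrix :: "nat \<Rightarrow> nat \<Rightarrow> (nat \<Rightarrow> nat \<Rightarrow> ereal) \<Rightarrow> bool" where
  "maxplus_matrix m n A \<longleftrightarrow> (\<forall>i\<in>{1..m}. \<forall>j\<in>{1..n}. A i j \<noteq> \<infinity>)"

definition mp_F :: "nat \<Rightarrow> (nat \<Rightarrow> nat \<Rightarrow> ereal) \<Rightarrow> (nat \<Rightarrow> real) \<Rightarrow> nat \<Rightarrow> ereal" where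
  "mp_F n A x i = Max ((\<lambda>j. A i j + ereal (x j)) ` {1..n})"

definition feasible :: "nat \<Rightarrow> (nat \<Rightarrow> real) \<Rightarrow> real \<Rightarrow> (nat \<Rightarrow> real) set" where
  "feasible n k c = {x. (\<forall>j. j \<notin> {1..n} \<longrightarrow> x j = 0) \<and> (\<Sum>j=1..n. k j * x j) = c}"

definition glob_opt ::
  "nat \<Rightarrow> nat \<Rightarrow> (nat \<Rightarrow> nat \<Rightarrow> ereal) \<Rightarrow> (nat \<Rightarrow> real) \<Rightarrow> real \<Rightarrow> (nat \<Rightarrow> real) \<Rightarrow> bool" where
  "glob_opt m n A k c xt \<longleftrightarrow> xt \<in> feasible n k c \<and>
     (\<forall>x\<in>feasible n k c. \<forall>i\<in>{1..m}. mp_F n A x i \<ge> mp_F n A xt i)"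

definition solvable ::
  "nat \<Rightarrow> nat \<Rightarrow> (nat \<Rightarrow> nat \<Rightarrow> ereal) \<Rightarrow> (nat \<Rightarrow> real) \<Rightarrow> real \<Rightarrow> bool" where
  "solvable m n A k c \<longleftrightarrow> (\<exists>xt. glob_opt m n A k c xt)"

end

theory Submission
  imports Defs
begin

text \<open>If some weight vanishes, lowering that coordinate keeps the point feasible and, by
  monotonicity of \<open>F\<close>, optimal, so optimal solutions are not unique.
  Conversely, if all weights are positive and \<open>x \<noteq> y\<close> are optimal, then
  \<open>F(x) = F(y) = F(x \<oplus> y)\<close>, while \<open>x \<oplus> y\<close> lies strictly above the hyperplane
  \<open>\<Sum> k\<^sub>j x\<^sub>j = c\<close>; shifting it down by a positive constant \<open>d\<close> gives a feasible point
  with value \<open>F(x) - d\<close>, which is strictly smaller in every row with a finite entry.\<close>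

lemma mp_F_ge: "j \<in> {1..n} \<Longrightarrow> A i j + ereal (x j) \<le> mp_F n A x i"
  unfolding mp_F_def by (rule Max_ge) auto

lemma mp_F_attained:
  assumes "n \<ge> 1"
  obtains j where "j \<in> {1..n}" "mp_F n A x i = A i j + ereal (x j)"
proof -
  have "mp_F n A x i \<in> (\<lambda>j. A i j + ereal (x j)) ` {1..n}"
    unfolding mp_F_def using assms by (intro Max_in) auto
  then show ?thesis using that by blast
qed

lemma mp_F_cong: "(\<And>j. j \<in> {1..n} \<Longrightarrow> x j = y j) \<Longrightarrow> mp_F n A x i = mp_F n A y i"
  unfolding mp_F_def by (intro arg_cong[where f = Max] image_cong) auto

lemma mp_F_mono:
  assumes "n \<ge> 1" and "\<And>j. j \<in> {1..n} \<Longrightarrow> x j \<le> y j"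
  shows "mp_F n A x i \<le> mp_F n A y i"
proof -
  obtain j where j: "j \<in> {1..n}" "mp_F n A x i = A i j + ereal (x j)"
    using mp_F_attained[OF assms(1)] .
  have "A i j + ereal (x j) \<le> A i j + ereal (y j)"
    using assms(2) j(1) by (intro add_left_mono) auto
  also have "\<dots> \<le> mp_F n A y i" using mp_F_ge j(1) .
  finally show ?thesis using j(2) by simp
qed

lemma mp_F_max:
  assumes "n \<ge> 1"
  shows "mp_F n A (\<lambda>j. max (x j) (y j)) i = max (mp_F n A x i) (mp_F n A y i)"
proof (rule antisym)
  obtain j where j: "j \<in> {1..n}" "mp_F n A (\<lambda>j. max (x j) (y j)) i = A i j + ereal (max (x j) (y j))"
    using mp_F_attained[OF assms] .
  have "A i j + ereal (max (x j) (y j)) = max (A i j + ereal (x j)) (A i j + ereal (y j))"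
  proof (cases "x j \<le> y j")
    case True
    then show ?thesis by (simp add: max_absorb2 add_left_mono)
  next
    case False
    then show ?thesis by (simp add: max_absorb1 add_left_mono)
  qed
  also have "\<dots> \<le> max (mp_F n A x i) (mp_F n A y i)"
    using j(1) by (intro max.mono mp_F_ge)
  finally show "mp_F n A (\<lambda>j. max (x j) (y j)) i \<le> max (mp_F n A x i) (mp_F n A y i)"
    using j(2) by simp
  show "max (mp_F n A x i) (mp_F n A y i) \<le> mp_F n A (\<lambda>j. max (x j) (y j)) i"
    using assms by (auto intro: mp_F_mono)
qed

lemma mp_F_add_const:
  assumes "n \<ge> 1"
  shows "mp_F n A (\<lambda>j. x j + d) i = mp_F n A x i + ereal d"
proof -
  have "mono (\<lambda>v::ereal. v + ereal d)" by (simp add: mono_def add_right_mono)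
  then have "mp_F n A x i + ereal d = Max ((\<lambda>j. (A i j + ereal (x j)) + ereal d) ` {1..n})"
    unfolding mp_F_def using assms by (subst mono_Max_commute) (auto simp: image_image)
  then show ?thesis unfolding mp_F_def by (simp add: add.assoc)
qed

lemma mp_F_finite:
  assumes "maxplus_matrix m n A" "i \<in> {1..m}" "j \<in> {1..n}" "A i j \<noteq> -\<infinity>"
  shows "\<bar>mp_F n A x i\<bar> \<noteq> \<infinity>"
proof -
  have "-\<infinity> < A i j + ereal (x j)" using assms(4) by (cases "A i j") auto
  also have "\<dots> \<le> mp_F n A x i" using mp_F_ge assms(3) .
  finally have "mp_F n A x i \<noteq> -\<infinity>" by simp
  moreover obtain j' where "j' \<in> {1..n}" "mp_F n A x i = A i j' + ereal (x j')"
    using mp_F_attained assms(3) by (metis atLeastAtMost_iff le_trans)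
  moreover have "A i j' \<noteq> \<infinity>" using assms(1,2) \<open>j' \<in> {1..n}\<close> unfolding maxplus_matrix_def by blast
  ultimately show ?thesis by auto
qed

lemma feasible_eqI:
  assumes "x \<in> feasible n k c" "y \<in> feasible n k c" "\<And>j. j \<in> {1..n} \<Longrightarrow> x j = y j"
  shows "x = y"
proof
  fix j
  show "x j = y j"
    using assms by (cases "j \<in> {1..n}") (auto simp: feasible_def)
qed

lemma feasible_shift:
  fixes z k :: "nat \<Rightarrow> real" and c :: real
  assumes "(\<Sum>j=1..n. k j) \<noteq> 0"
  defines "d \<equiv> ((\<Sum>j=1..n. k j * z j) - c) / (\<Sum>j=1..n. k j)"
  shows "(\<lambda>j. if j \<in> {1..n} then z j - d else 0) \<in> feasible n k c"
proof -
  have "(\<Sum>j=1..n. k j * (if j \<in> {1..n} then z j - d else 0))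
      = (\<Sum>j=1..n. k j * z j) - d * (\<Sum>j=1..n. k j)"
    by (simp add: algebra_simps sum_subtractf sum_distrib_left)
  also have "\<dots> = c" using assms(1) by (simp add: d_def)
  finally show ?thesis unfolding feasible_def by auto
qed

lemma weighted_sum_lt_max:
  fixes x y k :: "'a \<Rightarrow> real"
  assumes "finite I" "\<And>j. j \<in> I \<Longrightarrow> k j > 0" "j0 \<in> I" "x j0 < y j0"
  shows "(\<Sum>j\<in>I. k j * x j) < (\<Sum>j\<in>I. k j * max (x j) (y j))"
  using assms by (intro sum_strict_mono_ex1) (auto intro!: bexI[of _ j0] mult_left_mono)

lemma weighted_sum_max_gt:
  fixes x y k :: "'a \<Rightarrow> real"
  assumes "finite I" "\<And>j. j \<in> I \<Longrightarrow> k j > 0" "j0 \<in> I" "x j0 \<noteq> y j0"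
    and "(\<Sum>j\<in>I. k j * x j) = c" "(\<Sum>j\<in>I. k j * y j) = c"
  shows "c < (\<Sum>j\<in>I. k j * max (x j) (y j))"
proof (cases "x j0 < y j0")
  case True
  have "(\<Sum>j\<in>I. k j * x j) < (\<Sum>j\<in>I. k j * max (x j) (y j))"
    using assms(1-3) True by (rule weighted_sum_lt_max)
  then show ?thesis using assms(5) by simp
next
  case False
  then have "y j0 < x j0" using assms(4) by simp
  with assms(1-3) have "(\<Sum>j\<in>I. k j * y j) < (\<Sum>j\<in>I. k j * max (y j) (x j))"
    by (rule weighted_sum_lt_max)
  then show ?thesis using assms(6) by (simp add: max.commute)
qed

lemma glob_opt_lower_free_coordinate:
  assumes "n \<ge> 1" "glob_opt m n A k c x" "j \<in> {1..n}" "k j = 0"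
  shows "glob_opt m n A k c (x(j := x j - 1))"
proof -
  have x: "x \<in> feasible n k c" using assms(2) unfolding glob_opt_def by blast
  have "(\<Sum>l=1..n. k l * (x(j := x j - 1)) l) = (\<Sum>l=1..n. k l * x l)"
    using assms(4) by (intro sum.cong) auto
  then have "x(j := x j - 1) \<in> feasible n k c"
    using x assms(3) unfolding feasible_def by auto
  moreover have "mp_F n A (x(j := x j - 1)) i \<le> mp_F n A x i" for i
    using assms(1) by (intro mp_F_mono) auto
  ultimately show ?thesis
    using assms(2) unfolding glob_opt_def by (meson order_trans)
qed

lemma glob_opt_unique:
  assumes "n \<ge> 1" "maxplus_matrix m n A" "i \<in> {1..m}" "j1 \<in> {1..n}" "A i j1 \<noteq> -\<infinity>"
    and pos: "\<And>j. j \<in> {1..n} \<Longrightarrow> k j > 0"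
    and x: "glob_opt m n A k c x" and y: "glob_opt m n A k c y"
  shows "x = y"
proof (rule ccontr)
  assume "x \<noteq> y"
  have fx: "x \<in> feasible n k c" and fy: "y \<in> feasible n k c"
    using x y unfolding glob_opt_def by auto
  then obtain j0 where j0: "j0 \<in> {1..n}" "x j0 \<noteq> y j0"
    using \<open>x \<noteq> y\<close> feasible_eqI by blast
  define z where "z j = max (x j) (y j)" for j
  define S where "S = (\<Sum>j=1..n. k j)"
  define d where "d = ((\<Sum>j=1..n. k j * z j) - c) / S"
  define w where "w j = (if j \<in> {1..n} then z j - d else 0)" for j
  have "S > 0" unfolding S_def using pos assms(1) by (intro sum_pos) auto
  moreover have "c < (\<Sum>j=1..n. k j * z j)"
    unfolding z_def using fx fy j0 pos by (intro weighted_sum_max_gt) (auto simp: feasible_def)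
  ultimately have "d > 0" by (simp add: d_def)
  have fw: "w \<in> feasible n k c"
    using \<open>S > 0\<close> unfolding w_def d_def S_def by (intro feasible_shift) simp
  have "mp_F n A y i \<le> mp_F n A x i" using y fx assms(3) unfolding glob_opt_def by blast
  then have "mp_F n A z i = mp_F n A x i"
    unfolding z_def using mp_F_max[OF assms(1)] by (simp add: max_def)
  moreover have "mp_F n A w i = mp_F n A (\<lambda>j. z j + - d) i"
    by (rule mp_F_cong) (simp add: w_def)
  moreover have "\<dots> = mp_F n A z i + ereal (- d)"
    by (rule mp_F_add_const[OF assms(1)])
  moreover have "\<bar>mp_F n A x i\<bar> \<noteq> \<infinity>" using mp_F_finite assms(2-5) .
  ultimately have "mp_F n A w i < mp_F n A x i"
    using \<open>d > 0\<close> by (cases "mp_F n A x i") auto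
  moreover have "mp_F n A x i \<le> mp_F n A w i" using x fw assms(3) unfolding glob_opt_def by blast
  ultimately show False by simp
qed

theorem theorem3:
  fixes m n :: nat and A :: "nat \<Rightarrow> nat \<Rightarrow> ereal" and k :: "nat \<Rightarrow> real" and c :: real
  assumes "m \<ge> 1" and "n \<ge> 1"
    and "maxplus_matrix m n A"
    and "\<forall>j\<in>{1..n}. k j \<ge> 0"
    and "\<exists>j\<in>{1..n}. k j \<noteq> 0"
    and "\<forall>i\<in>{1..m}. \<exists>j\<in>{1..n}. A i j \<noteq> -\<infinity>"
    and "\<forall>j\<in>{1..n}. (\<forall>i\<in>{1..m}. A i j = -\<infinity>) \<longrightarrow> k j > 0"
    and "solvable m n A k c"
  shows "(\<exists>!xt. glob_opt m n A k c xt) \<longleftrightarrow> (\<forall>j\<in>{1..n}. k j > 0)"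
proof
  assume unique: "\<exists>!xt. glob_opt m n A k c xt"
  then obtain x where x: "glob_opt m n A k c x" by blast
  show "\<forall>j\<in>{1..n}. k j > 0"
  proof (rule ccontr)
    assume "\<not> (\<forall>j\<in>{1..n}. k j > 0)"
    then obtain j where j: "j \<in> {1..n}" "k j = 0" using assms(4) by force
    have "glob_opt m n A k c (x(j := x j - 1))"
      using glob_opt_lower_free_coordinate[OF assms(2) x j] .
    moreover have "x(j := x j - 1) \<noteq> x"
    proof
      assume "x(j := x j - 1) = x"
      then have "x j - 1 = x j" by (metis fun_upd_same)
      then show False by simp
    qed
    ultimately show False using unique x by blast
  qed
next
  assume pos: "\<forall>j\<in>{1..n}. k j > 0"
  have "(1::nat) \<in> {1..m}" using assms(1) by simp
  then obtain j1 where "j1 \<in> {1..n}" "A 1 j1 \<noteq> -\<infinity>" using assms(6) by blast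
  then show "\<exists>!xt. glob_opt m n A k c xt"
    using assms(8) glob_opt_unique[OF assms(2,3) \<open>1 \<in> {1..m}\<close>] pos
    unfolding solvable_def by blast
qed

end
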